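(* For a monoid $H$, the following are equivalent: (a) $H$ is aperiodic; (b) $\mathcal{P}_{\mathrm{fin},1}(H)$ is BF-atomic; (c) $\mathcal{P}_{\mathrm{fin},1}(H)$ is BF; (d) $\mathcal{P}_{\mathrm{fin},1}(H)$ is FF; (e) $\mathcal{P}_{\mathrm{fin},1}(H)$ is FF-atomic.
   Context: A monoid $H$ is aperiodic if every element $x\neq 1_H$ generates an infinite submonoid. $\mathcal{P}_{\mathrm{fin},1}(H)$ denotes the set of all non-empty finite subsets of $H$ containing $1_H$, a monoid under $XY=\{xy:x\in X,y\in Y\}$. In a monoid $M$: $x\mid_M y$ iff $y\in MxM$; $x,y$ are associated if each divides the other; $x$ properly divides $y$ if $x\mid_M y$ and $y\nmid_M x$. A unit-divisor is an element dividing $1_M$; other elements are non-unit-divisors. An irreducible is a non-unit-divisor $a$ with $a\neq xy$ for all non-unit-divisors $x,y$ properly dividing $a$; an atom is a non-unit-divisor that is not a product of two non-unit-divisors. A factorization (resp. atomic factorization) of $x$ is a finite word over the irreducibles (resp. atoms) whose product is $x$; its length is the number of letters. Two words are equivalent if each is, up to associatedness of letters, a subword of a permutation of the other. $M$ is BF if every non-unit-divisor has a factorization into irreducibles and, for each element, the set of lengths of its factorizations is bounded; FF if every non-unit-divisor has a factorization and each element has only finitely many pairwise inequivalent factorizations. BF-atomic and FF-atomic are defined identically with atoms and atomic factorizations in place of irreducibles and factorizations. *)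

theory Defs
  imports "HOL-Algebra.Coset" "HOL-Library.Sublist" "HOL-Library.Multiset"
begin

definition aperiodic :: "('a, 'b) monoid_scheme \<Rightarrow> bool" where
  "aperiodic H \<longleftrightarrow>
     (\<forall>x \<in> carrier H. x \<noteq> \<one>\<^bsub>H\<^esub> \<longrightarrow> infinite {x [^]\<^bsub>H\<^esub> (n::nat) | n. True})"

definition Pfin1 :: "('a, 'b) monoid_scheme \<Rightarrow> 'a set monoid" where
  "Pfin1 H = \<lparr> carrier = {X. X \<subseteq> carrier H \<and> finite X \<and> X \<noteq> {} \<and> \<one>\<^bsub>H\<^esub> \<in> X},
              monoid.mult = (\<lambda>X Y. X <#>\<^bsub>H\<^esub> Y),
              one = {\<one>\<^bsub>H\<^esub>} \<rparr>"

definition mdvd :: "('a, 'b) monoid_scheme \<Rightarrow> 'a \<Rightarrow> 'a \<Rightarrow> bool" where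
  "mdvd M x y \<longleftrightarrow> x \<in> carrier M \<and> y \<in> carrier M \<and>
     (\<exists>u \<in> carrier M. \<exists>v \<in> carrier M. y = u \<otimes>\<^bsub>M\<^esub> x \<otimes>\<^bsub>M\<^esub> v)"

definition massoc :: "('a, 'b) monoid_scheme \<Rightarrow> 'a \<Rightarrow> 'a \<Rightarrow> bool" where
  "massoc M x y \<longleftrightarrow> mdvd M x y \<and> mdvd M y x"

definition proper_dvd :: "('a, 'b) monoid_scheme \<Rightarrow> 'a \<Rightarrow> 'a \<Rightarrow> bool" where
  "proper_dvd M x y \<longleftrightarrow> mdvd M x y \<and> \<not> mdvd M y x"

definition unit_divisor :: "('a, 'b) monoid_scheme \<Rightarrow> 'a \<Rightarrow> bool" where
  "unit_divisor M x \<longleftrightarrow> mdvd M x \<one>\<^bsub>M\<^esub>"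

definition non_unit_divisor :: "('a, 'b) monoid_scheme \<Rightarrow> 'a \<Rightarrow> bool" where
  "non_unit_divisor M x \<longleftrightarrow> x \<in> carrier M \<and> \<not> unit_divisor M x"

definition irred :: "('a, 'b) monoid_scheme \<Rightarrow> 'a \<Rightarrow> bool" where
  "irred M a \<longleftrightarrow> non_unit_divisor M a \<and>
     (\<forall>x y. non_unit_divisor M x \<longrightarrow> non_unit_divisor M y \<longrightarrow>
        proper_dvd M x a \<longrightarrow> proper_dvd M y a \<longrightarrow> a \<noteq> x \<otimes>\<^bsub>M\<^esub> y)"

definition atom :: "('a, 'b) monoid_scheme \<Rightarrow> 'a \<Rightarrow> bool" where
  "atom M a \<longleftrightarrow> non_unit_divisor M a \<and>
     (\<forall>x y. non_unit_divisor M x \<longrightarrow> non_unit_divisor M y \<longrightarrow> a \<noteq> x \<otimes>\<^bsub>M\<^esub> y)"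

definition word_prod :: "('a, 'b) monoid_scheme \<Rightarrow> 'a list \<Rightarrow> 'a" where
  "word_prod M w = foldr (\<lambda>a b. a \<otimes>\<^bsub>M\<^esub> b) w \<one>\<^bsub>M\<^esub>"

definition facts_over :: "('a \<Rightarrow> bool) \<Rightarrow> ('a, 'b) monoid_scheme \<Rightarrow> 'a \<Rightarrow> 'a list set" where
  "facts_over P M x = {w. (\<forall>a \<in> set w. P a) \<and> word_prod M w = x}"

definition word_below :: "('a, 'b) monoid_scheme \<Rightarrow> 'a list \<Rightarrow> 'a list \<Rightarrow> bool" where
  "word_below M u v \<longleftrightarrow>
     (\<exists>v' u'. mset v' = mset v \<and> subseq u' v' \<and> list_all2 (massoc M) u u')"

definition word_equiv :: "('a, 'b) monoid_scheme \<Rightarrow> 'a list \<Rightarrow> 'a list \<Rightarrow> bool" where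
  "word_equiv M u v \<longleftrightarrow> word_below M u v \<and> word_below M v u"

definition BF_over :: "('a \<Rightarrow> bool) \<Rightarrow> ('a, 'b) monoid_scheme \<Rightarrow> bool" where
  "BF_over P M \<longleftrightarrow>
     (\<forall>x. non_unit_divisor M x \<longrightarrow> facts_over P M x \<noteq> {}) \<and>
     (\<forall>x \<in> carrier M. bdd_above (length ` facts_over P M x))"

definition FF_over :: "('a \<Rightarrow> bool) \<Rightarrow> ('a, 'b) monoid_scheme \<Rightarrow> bool" where
  "FF_over P M \<longleftrightarrow>
     (\<forall>x. non_unit_divisor M x \<longrightarrow> facts_over P M x \<noteq> {}) \<and>
     (\<forall>x \<in> carrier M. \<forall>A \<subseteq> facts_over P M x.
        (\<forall>u \<in> A. \<forall>v \<in> A. u \<noteq> v \<longrightarrow> \<not> word_equiv M u v) \<longrightarrow> finite A)"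

definition BF :: "('a, 'b) monoid_scheme \<Rightarrow> bool" where
  "BF M \<longleftrightarrow> BF_over (irred M) M"
definition BF_atomic :: "('a, 'b) monoid_scheme \<Rightarrow> bool" where
  "BF_atomic M \<longleftrightarrow> BF_over (atom M) M"
definition FF :: "('a, 'b) monoid_scheme \<Rightarrow> bool" where
  "FF M \<longleftrightarrow> FF_over (irred M) M"
definition FF_atomic :: "('a, 'b) monoid_scheme \<Rightarrow> bool" where
  "FF_atomic M \<longleftrightarrow> FF_over (atom M) M"

end

theory Submission
  imports Defs
begin

(* In P_fin,1(H) the only unit divisor is {1}, and both factors of a product XY are contained
   in it.  If H is aperiodic, then YZ is strictly larger than Z whenever Y contains some y ~= 1
   (otherwise all powers of y would lie in the finite set Z), and symmetrically.  Hence the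
   partial products of a factorization of X into non-unit-divisors form a strictly increasing
   chain of subsets of X, so such factorizations have fewer than |X| letters, all of them subsets
   of X; induction on |X| gives atomic factorizations.  If H is not aperiodic, some x ~= 1
   generates a finite submonoid C, which is an idempotent non-unit-divisor of P_fin,1(H): any
   factorization w of C yields the factorizations w^k of unbounded lengths. *)

lemma mem_carrier_Pfin1:
  "X \<in> carrier (Pfin1 H) \<longleftrightarrow> X \<subseteq> carrier H \<and> finite X \<and> \<one>\<^bsub>H\<^esub> \<in> X"
  by (auto simp: Pfin1_def)

lemma mult_Pfin1 [simp]: "X \<otimes>\<^bsub>Pfin1 H\<^esub> Y = X <#>\<^bsub>H\<^esub> Y"
  by (simp add: Pfin1_def)

lemma one_Pfin1 [simp]: "\<one>\<^bsub>Pfin1 H\<^esub> = {\<one>\<^bsub>H\<^esub>}"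
  by (simp add: Pfin1_def)

lemma finite_set_mult: "finite X \<Longrightarrow> finite Y \<Longrightarrow> finite (X <#>\<^bsub>H\<^esub> Y)"
  unfolding set_mult_def by simp

lemma word_prod_Nil [simp]: "word_prod M [] = \<one>\<^bsub>M\<^esub>"
  by (simp add: word_prod_def)

lemma word_prod_Cons [simp]: "word_prod M (a # w) = a \<otimes>\<^bsub>M\<^esub> word_prod M w"
  by (simp add: word_prod_def)

lemma word_equiv_length: "word_equiv M u v \<Longrightarrow> length u = length v"
  unfolding word_equiv_def word_below_def
  by (metis le_antisym list_all2_lengthD list_emb_length size_mset)

lemma atom_imp_irred: "atom M a \<Longrightarrow> irred M a"
  unfolding atom_def irred_def by blast

lemma atom_imp_non_unit_divisor: "atom M a \<Longrightarrow> non_unit_divisor M a"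
  unfolding atom_def by blast

lemma irred_imp_non_unit_divisor: "irred M a \<Longrightarrow> non_unit_divisor M a"
  unfolding irred_def by blast

context monoid
begin

lemma set_mult_assoc_monoid:
  assumes "X \<subseteq> carrier G" "Y \<subseteq> carrier G" "Z \<subseteq> carrier G"
  shows "(X <#> Y) <#> Z = X <#> (Y <#> Z)"
  unfolding set_mult_def using assms by (force simp: m_assoc)

lemma one_set_mult: "X \<subseteq> carrier G \<Longrightarrow> {\<one>} <#> X = X"
  unfolding set_mult_def by force

lemma set_mult_one: "X \<subseteq> carrier G \<Longrightarrow> X <#> {\<one>} = X"
  unfolding set_mult_def by force

lemma set_mult_superset_left: "X \<subseteq> carrier G \<Longrightarrow> \<one> \<in> Y \<Longrightarrow> X \<subseteq> X <#> Y"
  unfolding set_mult_def by force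

lemma set_mult_superset_right: "Y \<subseteq> carrier G \<Longrightarrow> \<one> \<in> X \<Longrightarrow> Y \<subseteq> X <#> Y"
  unfolding set_mult_def by force

lemma monoid_Pfin1: "monoid (Pfin1 G)"
proof (rule monoidI)
  fix X Y assume "X \<in> carrier (Pfin1 G)" "Y \<in> carrier (Pfin1 G)"
  then show "X \<otimes>\<^bsub>Pfin1 G\<^esub> Y \<in> carrier (Pfin1 G)"
    using set_mult_closed set_mult_superset_left[of X Y]
    by (auto simp: mem_carrier_Pfin1 finite_set_mult)
qed (auto simp: mem_carrier_Pfin1 set_mult_assoc_monoid one_set_mult set_mult_one)

lemma word_prod_closed: "set w \<subseteq> carrier G \<Longrightarrow> word_prod G w \<in> carrier G"
  by (induction w) auto

lemma word_prod_append:
  "set u \<subseteq> carrier G \<Longrightarrow> set v \<subseteq> carrier G \<Longrightarrow>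
   word_prod G (u @ v) = word_prod G u \<otimes> word_prod G v"
  by (induction u) (auto simp: m_assoc word_prod_closed)

lemma non_unit_divisor_imp_ne_one: "non_unit_divisor G x \<Longrightarrow> x \<noteq> \<one>"
  unfolding non_unit_divisor_def unit_divisor_def mdvd_def by force

lemma word_prod_concat_replicate_idem:
  assumes "set w \<subseteq> carrier G" "word_prod G w = e" "e \<otimes> e = e"
  shows "word_prod G (concat (replicate (Suc k) w)) = e"
proof (induction k)
  case (Suc k)
  have "set (concat (replicate (Suc k) w)) \<subseteq> carrier G" using assms(1) by auto
  then show ?case using Suc assms by (simp add: word_prod_append)
qed (use assms in \<open>simp add: word_prod_append\<close>)

lemma idempotent_not_BF_over_FF_over:
  assumes e: "non_unit_divisor G e" "e \<otimes> e = e" and P: "\<And>a. P a \<Longrightarrow> a \<in> carrier G"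
  shows "\<not> BF_over P G \<and> \<not> FF_over P G"
proof (cases "facts_over P G e = {}")
  case True
  then show ?thesis using e(1) unfolding BF_over_def FF_over_def by blast
next
  case False
  then obtain w where w: "\<forall>a\<in>set w. P a" "word_prod G w = e"
    unfolding facts_over_def by blast
  have "w \<noteq> []" using w(2) non_unit_divisor_imp_ne_one[OF e(1)] by auto
  define pow where "pow k = concat (replicate (Suc k) w)" for k
  have pow_facts: "pow k \<in> facts_over P G e" for k
    using word_prod_concat_replicate_idem[of w e k] w e(2) P unfolding facts_over_def pow_def by auto
  have length_pow: "length (pow k) = Suc k * length w" for k
    by (simp add: pow_def length_concat sum_list_replicate)
  then have length_pow_inj: "length (pow k) = length (pow l) \<Longrightarrow> k = l" for k l
    using \<open>w \<noteq> []\<close> by simp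
  have e_carrier: "e \<in> carrier G" using e(1) unfolding non_unit_divisor_def by blast
  have "\<not> bdd_above (length ` facts_over P G e)"
  proof
    assume "bdd_above (length ` facts_over P G e)"
    then obtain B where "\<forall>u\<in>facts_over P G e. length u \<le> B" unfolding bdd_above_def by auto
    then have "Suc B * length w \<le> B" using pow_facts length_pow by metis
    moreover have "Suc B \<le> Suc B * length w" using \<open>w \<noteq> []\<close> by (cases w) auto
    ultimately show False by simp
  qed
  then have "\<not> BF_over P G" unfolding BF_over_def using e_carrier by auto
  moreover have "\<not> FF_over P G"
  proof
    assume "FF_over P G"
    moreover have "\<not> word_equiv G u v" if "u \<in> range pow" "v \<in> range pow" "u \<noteq> v" for u v
      using that word_equiv_length length_pow_inj by blast
    ultimately have "finite (range pow)"
      using e_carrier pow_facts unfolding FF_over_def by (metis image_subset_iff)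
    moreover have "inj pow" using length_pow_inj by (intro injI) simp
    ultimately show False using finite_imageD by blast
  qed
  ultimately show ?thesis by blast
qed

lemma non_unit_divisor_Pfin1_iff:
  "non_unit_divisor (Pfin1 G) X \<longleftrightarrow> X \<in> carrier (Pfin1 G) \<and> X \<noteq> {\<one>}"
proof
  assume "non_unit_divisor (Pfin1 G) X"
  then show "X \<in> carrier (Pfin1 G) \<and> X \<noteq> {\<one>}"
    using monoid.non_unit_divisor_imp_ne_one[OF monoid_Pfin1]
    unfolding non_unit_divisor_def by auto
next
  assume X: "X \<in> carrier (Pfin1 G) \<and> X \<noteq> {\<one>}"
  have "\<not> unit_divisor (Pfin1 G) X"
  proof
    assume "unit_divisor (Pfin1 G) X"
    then obtain U V where UV: "U \<in> carrier (Pfin1 G)" "V \<in> carrier (Pfin1 G)" "{\<one>} = U <#> X <#> V"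
      unfolding unit_divisor_def mdvd_def by auto
    have "X \<subseteq> U <#> X" using UV X by (intro set_mult_superset_right) (auto simp: mem_carrier_Pfin1)
    also have "\<dots> \<subseteq> U <#> X <#> V"
      using UV X set_mult_closed by (intro set_mult_superset_left) (auto simp: mem_carrier_Pfin1)
    finally have "X \<subseteq> {\<one>}" using UV(3) by simp
    then show False using X by (auto simp: mem_carrier_Pfin1)
  qed
  then show "non_unit_divisor (Pfin1 G) X" using X unfolding non_unit_divisor_def by blast
qed

lemma aperiodic_pow_not_mem:
  assumes "aperiodic G" "x \<in> carrier G" "x \<noteq> \<one>" "finite Y"
  shows "\<exists>n::nat. x [^] n \<notin> Y"
proof (rule ccontr)
  assume "\<nexists>n::nat. x [^] n \<notin> Y"
  then have "{x [^] (n::nat) | n. True} \<subseteq> Y" by blast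
  then have "finite {x [^] (n::nat) | n. True}" using assms(4) by (rule finite_subset)
  then show False using assms(1-3) unfolding aperiodic_def by blast
qed

lemma aperiodic_psubset_set_mult_left:
  assumes ap: "aperiodic G" and X: "X \<in> carrier (Pfin1 G)" "X \<noteq> {\<one>}" and Y: "Y \<in> carrier (Pfin1 G)"
  shows "Y \<subset> X <#> Y"
proof
  show "Y \<subseteq> X <#> Y" using X Y by (intro set_mult_superset_right) (auto simp: mem_carrier_Pfin1)
  show "Y \<noteq> X <#> Y"
  proof
    assume "Y = X <#> Y"
    then have eq: "X <#> Y = Y" ..
    obtain x where x: "x \<in> X" "x \<noteq> \<one>" "x \<in> carrier G" using X by (auto simp: mem_carrier_Pfin1)
    have "x [^] n \<in> Y" for n :: nat
    proof (induction n)
      case (Suc n)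
      then have "x \<otimes> x [^] n \<in> X <#> Y" using x(1) unfolding set_mult_def by blast
      then show ?case using eq x(3) nat_pow_Suc2 by metis
    qed (use Y in \<open>simp add: mem_carrier_Pfin1\<close>)
    then show False using aperiodic_pow_not_mem[OF ap x(3,2)] Y by (auto simp: mem_carrier_Pfin1)
  qed
qed

lemma aperiodic_psubset_set_mult_right:
  assumes ap: "aperiodic G" and X: "X \<in> carrier (Pfin1 G)" and Y: "Y \<in> carrier (Pfin1 G)" "Y \<noteq> {\<one>}"
  shows "X \<subset> X <#> Y"
proof
  show "X \<subseteq> X <#> Y" using X Y by (intro set_mult_superset_left) (auto simp: mem_carrier_Pfin1)
  show "X \<noteq> X <#> Y"
  proof
    assume "X = X <#> Y"
    then have eq: "X <#> Y = X" ..
    obtain y where y: "y \<in> Y" "y \<noteq> \<one>" "y \<in> carrier G" using Y by (auto simp: mem_carrier_Pfin1)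
    have "y [^] n \<in> X" for n :: nat
    proof (induction n)
      case (Suc n)
      then have "y [^] n \<otimes> y \<in> X <#> Y" using y(1) unfolding set_mult_def by blast
      then show ?case using eq by simp
    qed (use X in \<open>simp add: mem_carrier_Pfin1\<close>)
    then show False using aperiodic_pow_not_mem[OF ap y(3,2)] X by (auto simp: mem_carrier_Pfin1)
  qed
qed

lemma aperiodic_length_less_card:
  assumes ap: "aperiodic G" and "\<forall>a\<in>set w. non_unit_divisor (Pfin1 G) a"
  shows "length w < card (word_prod (Pfin1 G) w)"
  using assms(2)
proof (induction w)
  case (Cons a w)
  let ?X = "word_prod (Pfin1 G) w"
  have X: "?X \<in> carrier (Pfin1 G)" using Cons.prems
    by (intro monoid.word_prod_closed[OF monoid_Pfin1]) (auto simp: non_unit_divisor_def)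
  have a: "a \<in> carrier (Pfin1 G)" "a \<noteq> {\<one>}" using Cons.prems non_unit_divisor_Pfin1_iff by auto
  have "?X \<subset> a <#> ?X" by (rule aperiodic_psubset_set_mult_left[OF ap a X])
  moreover have "finite (a <#> ?X)" using a X by (simp add: mem_carrier_Pfin1 finite_set_mult)
  ultimately have "card ?X < card (a <#> ?X)" by (simp add: psubset_card_mono)
  then show ?case using Cons by simp
qed simp

lemma letter_subset_word_prod_Pfin1:
  "set w \<subseteq> carrier (Pfin1 G) \<Longrightarrow> a \<in> set w \<Longrightarrow> a \<subseteq> word_prod (Pfin1 G) w"
proof (induction w)
  case (Cons b w)
  have b: "b \<in> carrier (Pfin1 G)" and X: "word_prod (Pfin1 G) w \<in> carrier (Pfin1 G)"
    using Cons.prems monoid.word_prod_closed[OF monoid_Pfin1] by auto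
  show ?case
  proof (cases "a = b")
    case True
    then show ?thesis using b X by (simp add: set_mult_superset_left mem_carrier_Pfin1)
  next
    case False
    then have "a \<subseteq> word_prod (Pfin1 G) w" using Cons by simp
    also have "\<dots> \<subseteq> b <#> word_prod (Pfin1 G) w"
      using b X by (intro set_mult_superset_right) (auto simp: mem_carrier_Pfin1)
    finally show ?thesis by simp
  qed
qed simp

lemma aperiodic_finite_facts_over_Pfin1:
  assumes ap: "aperiodic G" and P: "\<And>a. P a \<Longrightarrow> non_unit_divisor (Pfin1 G) a"
    and X: "X \<in> carrier (Pfin1 G)"
  shows "finite (facts_over P (Pfin1 G) X)"
proof -
  have "facts_over P (Pfin1 G) X \<subseteq> {w. set w \<subseteq> Pow X \<and> length w \<le> card X}"
  proof
    fix w assume "w \<in> facts_over P (Pfin1 G) X"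
    then have w: "\<forall>a\<in>set w. non_unit_divisor (Pfin1 G) a" "word_prod (Pfin1 G) w = X"
      using P unfolding facts_over_def by auto
    then have "set w \<subseteq> Pow X"
      using letter_subset_word_prod_Pfin1 unfolding non_unit_divisor_def by blast
    moreover have "length w \<le> card X" using aperiodic_length_less_card[OF ap w(1)] w(2) by simp
    ultimately show "w \<in> {w. set w \<subseteq> Pow X \<and> length w \<le> card X}" by simp
  qed
  moreover have "finite {w. set w \<subseteq> Pow X \<and> length w \<le> card X}"
    using X by (intro finite_lists_length_le) (simp add: mem_carrier_Pfin1)
  ultimately show ?thesis by (rule finite_subset)
qed

lemma aperiodic_atomic_factorization_Pfin1:
  assumes ap: "aperiodic G" and "non_unit_divisor (Pfin1 G) X"
  shows "\<exists>w. (\<forall>a\<in>set w. atom (Pfin1 G) a) \<and> word_prod (Pfin1 G) w = X"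
  using assms(2)
proof (induction "card X" arbitrary: X rule: less_induct)
  case less
  show ?case
  proof (cases "atom (Pfin1 G) X")
    case True
    then show ?thesis using less.prems
      by (intro exI[of _ "[X]"]) (auto simp: set_mult_one mem_carrier_Pfin1 non_unit_divisor_def)
  next
    case False
    then obtain Y Z where Y: "non_unit_divisor (Pfin1 G) Y" and Z: "non_unit_divisor (Pfin1 G) Z"
      and X: "X = Y <#> Z"
      using less.prems unfolding atom_def by auto
    have Y': "Y \<in> carrier (Pfin1 G)" "Y \<noteq> {\<one>}" and Z': "Z \<in> carrier (Pfin1 G)" "Z \<noteq> {\<one>}"
      using Y Z non_unit_divisor_Pfin1_iff by auto
    have "finite X" using less.prems by (simp add: non_unit_divisor_def mem_carrier_Pfin1)
    then have "card Y < card X" "card Z < card X"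
      using aperiodic_psubset_set_mult_right[OF ap Y'(1) Z'] aperiodic_psubset_set_mult_left[OF ap Y' Z'(1)] X
      by (auto intro: psubset_card_mono)
    then obtain u v where
      u: "\<forall>a\<in>set u. atom (Pfin1 G) a" "word_prod (Pfin1 G) u = Y" and
      v: "\<forall>a\<in>set v. atom (Pfin1 G) a" "word_prod (Pfin1 G) v = Z"
      using less.hyps Y Z by meson
    then have "set u \<subseteq> carrier (Pfin1 G)" "set v \<subseteq> carrier (Pfin1 G)"
      unfolding atom_def non_unit_divisor_def by auto
    then have "word_prod (Pfin1 G) (u @ v) = X"
      using monoid.word_prod_append[OF monoid_Pfin1] u(2) v(2) X by simp
    then show ?thesis using u(1) v(1) by (intro exI[of _ "u @ v"]) auto
  qed
qed

lemma not_aperiodic_idempotent_Pfin1: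
  assumes "\<not> aperiodic G"
  shows "\<exists>E. non_unit_divisor (Pfin1 G) E \<and> E <#> E = E"
proof -
  obtain x where x: "x \<in> carrier G" "x \<noteq> \<one>" "finite {x [^] (n::nat) | n. True}"
    using assms unfolding aperiodic_def by blast
  define E where "E = {x [^] (n::nat) | n. True}"
  have E: "E \<in> carrier (Pfin1 G)"
    unfolding E_def mem_carrier_Pfin1 using x by (auto intro!: exI[of _ "0::nat"])
  moreover have "x \<in> E" unfolding E_def using x(1) by (auto intro!: exI[of _ "1::nat"])
  ultimately have "non_unit_divisor (Pfin1 G) E" using x(2) non_unit_divisor_Pfin1_iff by auto
  moreover have "E <#> E = E"
  proof
    show "E <#> E \<subseteq> E" unfolding E_def set_mult_def using x(1) by (auto simp: nat_pow_mult)
    show "E \<subseteq> E <#> E" using E by (intro set_mult_superset_left) (auto simp: mem_carrier_Pfin1)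
  qed
  ultimately show ?thesis by blast
qed

lemma aperiodic_iff_BF_over_FF_over_Pfin1:
  assumes atom_P: "\<And>a. atom (Pfin1 G) a \<Longrightarrow> P a"
    and P_non_unit: "\<And>a. P a \<Longrightarrow> non_unit_divisor (Pfin1 G) a"
  shows aperiodic_iff_BF_over_Pfin1: "aperiodic G \<longleftrightarrow> BF_over P (Pfin1 G)"
    and aperiodic_iff_FF_over_Pfin1: "aperiodic G \<longleftrightarrow> FF_over P (Pfin1 G)"
proof -
  have not_aperiodic: "\<not> BF_over P (Pfin1 G) \<and> \<not> FF_over P (Pfin1 G)" if nap: "\<not> aperiodic G"
  proof -
    obtain E where E: "non_unit_divisor (Pfin1 G) E" "E <#> E = E"
      using not_aperiodic_idempotent_Pfin1[OF nap] by blast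
    have "P a \<Longrightarrow> a \<in> carrier (Pfin1 G)" for a
      using P_non_unit unfolding non_unit_divisor_def by blast
    then show ?thesis using monoid.idempotent_not_BF_over_FF_over[OF monoid_Pfin1 E(1)] E(2) by simp
  qed
  have aperiodic: "BF_over P (Pfin1 G) \<and> FF_over P (Pfin1 G)" if ap: "aperiodic G"
  proof -
    have ex: "facts_over P (Pfin1 G) X \<noteq> {}" if "non_unit_divisor (Pfin1 G) X" for X
      using aperiodic_atomic_factorization_Pfin1[OF ap that] atom_P unfolding facts_over_def by blast
    have fin: "finite (facts_over P (Pfin1 G) X)" if "X \<in> carrier (Pfin1 G)" for X
      using aperiodic_finite_facts_over_Pfin1[OF ap P_non_unit that] .
    have "BF_over P (Pfin1 G)"
      unfolding BF_over_def using ex fin by (simp add: bdd_above_finite)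
    moreover have "FF_over P (Pfin1 G)"
      unfolding FF_over_def using ex fin by (metis finite_subset)
    ultimately show ?thesis ..
  qed
  show "aperiodic G \<longleftrightarrow> BF_over P (Pfin1 G)" "aperiodic G \<longleftrightarrow> FF_over P (Pfin1 G)"
    using not_aperiodic aperiodic by auto
qed

end

theorem proposition2p7:
  fixes H :: "('a, 'b) monoid_scheme"
  assumes "monoid H"
  shows "(aperiodic H \<longleftrightarrow> BF_atomic (Pfin1 H)) \<and>
         (aperiodic H \<longleftrightarrow> BF (Pfin1 H)) \<and>
         (aperiodic H \<longleftrightarrow> FF (Pfin1 H)) \<and>
         (aperiodic H \<longleftrightarrow> FF_atomic (Pfin1 H))"
proof -
  interpret monoid H by (rule assms)
  have BF_atom: "aperiodic H \<longleftrightarrow> BF_over (atom (Pfin1 H)) (Pfin1 H)"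
    by (rule aperiodic_iff_BF_over_Pfin1) (simp_all add: atom_imp_non_unit_divisor)
  have FF_atom: "aperiodic H \<longleftrightarrow> FF_over (atom (Pfin1 H)) (Pfin1 H)"
    by (rule aperiodic_iff_FF_over_Pfin1) (simp_all add: atom_imp_non_unit_divisor)
  have BF_irred: "aperiodic H \<longleftrightarrow> BF_over (irred (Pfin1 H)) (Pfin1 H)"
    by (rule aperiodic_iff_BF_over_Pfin1) (simp_all add: irred_imp_non_unit_divisor atom_imp_irred)
  have FF_irred: "aperiodic H \<longleftrightarrow> FF_over (irred (Pfin1 H)) (Pfin1 H)"
    by (rule aperiodic_iff_FF_over_Pfin1) (simp_all add: irred_imp_non_unit_divisor atom_imp_irred)
  show ?thesis unfolding BF_atomic_def BF_def FF_def FF_atomic_def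
    by (intro conjI BF_atom FF_atom BF_irred FF_irred)
qed

end
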